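(* Let $G$ be a finite unweighted undirected graph with $n$ nodes, and let $H$ be the spanning subgraph of $G$ with all nodes of $G$ and no edges. Apply $2$-spanner-completion to $H$. Regardless of the choices made (of violating pairs and of shortest paths), the resulting graph $H$ has at most $O(n^{3/2})$ edges.
   Context: For a graph $F$ and nodes $u,v$, $d_F(u,v)$ denotes the length (number of edges) of a shortest path from $u$ to $v$ in $F$ ($\infty$ if none exists). A spanning subgraph $H$ of $G$ is an additive $k$-spanner of $G$ if $d_H(u,v) \le d_G(u,v)+k$ for every pair of nodes $u,v$. The procedure $k$-spanner-completion applied to a spanning subgraph $H$ of $G$ is: as long as there exists a pair of nodes $u,v$ with $d_H(u,v) > d_G(u,v)+k$, pick such a pair, find a shortest path from $u$ to $v$ in $G$, and add all edges of this path to $H$. When it terminates, $H$ is an additive $k$-spanner of $G$. The $O(\cdot)$ bound refers to an absolute constant independent of $G$ and $n$. *)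

theory Defs
  imports Complex_Main "HOL-Library.Extended_Nat"
begin

definition simple_graph :: "nat set \<Rightarrow> nat set set \<Rightarrow> bool" where
  "simple_graph V E \<longleftrightarrow> finite V \<and> (\<forall>e\<in>E. e \<subseteq> V \<and> card e = 2)"

definition is_walk :: "nat set set \<Rightarrow> nat list \<Rightarrow> bool" where
  "is_walk E xs \<longleftrightarrow> xs \<noteq> [] \<and> (\<forall>i. Suc i < length xs \<longrightarrow> {xs ! i, xs ! Suc i} \<in> E)"

text \<open>Distance: number of edges of a shortest walk, infinity if none.\<close>
definition dist :: "nat set set \<Rightarrow> nat \<Rightarrow> nat \<Rightarrow> enat" where
  "dist E u v = Inf {enat (length xs - 1) | xs. is_walk E xs \<and> hd xs = u \<and> last xs = v}"

definition is_shortest_path :: "nat set set \<Rightarrow> nat \<Rightarrow> nat \<Rightarrow> nat list \<Rightarrow> bool" where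
  "is_shortest_path E u v xs \<longleftrightarrow> is_walk E xs \<and> hd xs = u \<and> last xs = v
      \<and> enat (length xs - 1) = dist E u v"

definition path_edges :: "nat list \<Rightarrow> nat set set" where
  "path_edges xs = {{xs ! i, xs ! Suc i} | i. Suc i < length xs}"

definition violating :: "nat set \<Rightarrow> nat set set \<Rightarrow> nat \<Rightarrow> nat set set \<Rightarrow> nat \<Rightarrow> nat \<Rightarrow> bool" where
  "violating V E k H u v \<longleftrightarrow> u \<in> V \<and> v \<in> V \<and> dist H u v > dist E u v + enat k"

definition completion_step :: "nat set \<Rightarrow> nat set set \<Rightarrow> nat \<Rightarrow> nat set set \<Rightarrow> nat set set \<Rightarrow> bool" where
  "completion_step V E k H H' \<longleftrightarrow> (\<exists>u v p. violating V E k H u v \<and> is_shortest_path E u v p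
      \<and> H' = H \<union> path_edges p)"

end

theory Submission
  imports Defs "HOL-Library.FuncSet"
begin

text \<open>A potential argument, with \<open>T = \<lceil>\<surd>n\<rceil>\<close>; a node is heavy if its degree in \<open>H\<close> is at least
  \<open>T\<close>. A completion step adds a shortest path \<open>p\<close> between a violating pair \<open>u\<close>, \<open>v\<close>. Every new
  edge either has a light endpoint, which raises the capped degree sum
  \<open>\<Psi> = \<Sum>\<^sub>x min (deg\<^sub>H x) T \<le> n T\<close>, or starts at a heavy node of \<open>p\<close>. Nodes of \<open>p\<close> three or
  more steps apart have disjoint neighbourhoods, so the heavy nodes of \<open>p\<close> have at least \<open>T/3\<close>
  distinct \<open>H\<close>-neighbours each. For every such neighbour \<open>y\<close>, adding \<open>p\<close> lowers
  \<open>d\<^sub>H(y,u) + d\<^sub>H(y,v)\<close> from at least \<open>d\<^sub>G(u,v) + 3\<close> to at most \<open>d\<^sub>G(u,v) + 2\<close>, so the capped excess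
  \<open>\<Phi> = \<Sum>\<^sub>a\<^sub>,\<^sub>b min 3 (d\<^sub>H(a,b) - d\<^sub>G(a,b)) \<le> 3n\<^sup>2\<close> drops by at least one. Hence
  \<open>T |H| + 3\<Phi> - 2T\<Psi>\<close> never increases, which gives \<open>T |H| \<le> 2nT\<^sup>2 + 9n\<^sup>2\<close>, i.e.
  \<open>|H| \<le> 13 n\<^bsup>3/2\<^esup>\<close>.\<close>

section \<open>Walks and distances\<close>

inductive walk_len :: "nat set set \<Rightarrow> nat \<Rightarrow> nat \<Rightarrow> nat \<Rightarrow> bool" for E where
  walk_len_refl: "walk_len E u u 0"
| walk_len_step: "{u, w} \<in> E \<Longrightarrow> walk_len E w v n \<Longrightarrow> walk_len E u v (Suc n)"

lemma is_walk_Cons_Cons: "is_walk E (x # y # zs) \<longleftrightarrow> {x, y} \<in> E \<and> is_walk E (y # zs)"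
  unfolding is_walk_def by (auto simp: nth_Cons split: nat.splits)

lemma is_walk_imp_walk_len: "is_walk E xs \<Longrightarrow> walk_len E (hd xs) (last xs) (length xs - 1)"
proof (induction xs rule: induct_list012)
  case (3 x y zs)
  then show ?case by (auto simp: is_walk_Cons_Cons intro: walk_len_step)
qed (auto simp: is_walk_def intro: walk_len_refl)

lemma walk_len_imp_is_walk:
  "walk_len E u v n \<Longrightarrow> \<exists>xs. is_walk E xs \<and> hd xs = u \<and> last xs = v \<and> length xs = Suc n"
proof (induction rule: walk_len.induct)
  case (walk_len_refl u)
  show ?case by (intro exI[of _ "[u]"]) (simp add: is_walk_def)
next
  case (walk_len_step u w v n)
  then obtain zs where "is_walk E (w # zs)" "last (w # zs) = v" "length zs = n"
    by (metis length_Suc_conv list.sel(1))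
  then show ?case using walk_len_step.hyps
    by (intro exI[of _ "u # w # zs"]) (simp add: is_walk_Cons_Cons)
qed

lemma dist_eq_Inf_walk_len: "dist E u v = Inf {enat n | n. walk_len E u v n}"
proof -
  have "{enat (length xs - 1) | xs. is_walk E xs \<and> hd xs = u \<and> last xs = v}
      = {enat n | n. walk_len E u v n}"
    by (auto dest: is_walk_imp_walk_len) (metis diff_Suc_1' walk_len_imp_is_walk)
  then show ?thesis unfolding dist_def by simp
qed

lemma dist_le_walk_len: "walk_len E u v n \<Longrightarrow> dist E u v \<le> enat n"
  unfolding dist_eq_Inf_walk_len by (rule Inf_lower) blast

lemma walk_len_dist: "dist E u v = enat n \<Longrightarrow> walk_len E u v n"
proof -
  assume dist: "dist E u v = enat n"
  let ?A = "{enat n | n. walk_len E u v n}"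
  have "?A \<noteq> {}" using dist unfolding dist_eq_Inf_walk_len Inf_enat_def by (auto split: if_splits)
  then have "Inf ?A \<in> ?A" unfolding Inf_enat_def by (auto intro: LeastI)
  then show ?thesis using dist unfolding dist_eq_Inf_walk_len by auto
qed

lemma walk_len_edge: "{u, v} \<in> E \<Longrightarrow> walk_len E u v 1"
  by (auto intro: walk_len.intros)

lemma walk_len_trans: "walk_len E a b m \<Longrightarrow> walk_len E b c n \<Longrightarrow> walk_len E a c (m + n)"
  by (induction rule: walk_len.induct) (auto intro: walk_len_step)

lemma walk_len_snoc: "walk_len E a b m \<Longrightarrow> {b, c} \<in> E \<Longrightarrow> walk_len E a c (Suc m)"
  using walk_len_trans[OF _ walk_len_edge] by fastforce

lemma walk_len_sym: "walk_len E a b m \<Longrightarrow> walk_len E b a m"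
proof (induction rule: walk_len.induct)
  case (walk_len_step u w v n)
  then show ?case by (auto intro: walk_len_snoc simp: insert_commute)
qed (rule walk_len_refl)

lemma walk_len_mono: "walk_len E a b m \<Longrightarrow> E \<subseteq> E' \<Longrightarrow> walk_len E' a b m"
  by (induction rule: walk_len.induct) (auto intro: walk_len.intros)

lemma dist_triangle: "dist E a c \<le> dist E a b + dist E b c"
proof (cases "dist E a b"; cases "dist E b c")
  fix m n assume "dist E a b = enat m" "dist E b c = enat n"
  then show ?thesis by (metis dist_le_walk_len plus_enat_simps(1) walk_len_dist walk_len_trans)
qed auto

lemma dist_antimono: "E \<subseteq> E' \<Longrightarrow> dist E' a b \<le> dist E a b"
  by (cases "dist E a b") (auto intro: dist_le_walk_len walk_len_mono walk_len_dist)

lemma dist_commute: "dist E a b = dist E b a"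
proof -
  have "dist E x y \<le> dist E y x" for x y
    by (cases "dist E y x") (auto intro: dist_le_walk_len walk_len_sym walk_len_dist)
  then show ?thesis by (metis antisym)
qed

lemma path_edges_subset: "is_walk E p \<Longrightarrow> path_edges p \<subseteq> E"
  unfolding is_walk_def path_edges_def by auto

lemma walk_len_segment:
  assumes "path_edges p \<subseteq> E" "i \<le> j" "j < length p"
  shows "walk_len E (p ! i) (p ! j) (j - i)"
  using assms(2,3)
proof (induction j)
  case 0
  then show ?case by (simp add: walk_len_refl)
next
  case (Suc j)
  show ?case
  proof (cases "i = Suc j")
    case False
    have "{p ! j, p ! Suc j} \<in> E" using assms(1) Suc.prems unfolding path_edges_def by blast
    then show ?thesis using Suc False by (auto intro: walk_len_snoc simp: Suc_diff_le)
  qed (simp add: walk_len_refl)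
qed

locale shortest_path =
  fixes E :: "nat set set" and u v :: nat and p :: "nat list"
  assumes shortest: "is_shortest_path E u v p"
begin

lemma dist_eq: "dist E u v = enat (length p - 1)"
  and path_edges: "path_edges p \<subseteq> E"
  and not_Nil: "p \<noteq> []"
  and nth_first: "p ! 0 = u"
  and nth_last: "p ! (length p - 1) = v"
  using shortest path_edges_subset
  unfolding is_shortest_path_def is_walk_def by (auto simp: hd_conv_nth last_conv_nth)

lemma index_distance_le:
  assumes "i \<le> j" "j < length p" "walk_len E (p ! i) (p ! j) k"
  shows "j - i \<le> k"
proof -
  have "walk_len E (p ! 0) (p ! i) i"
    using walk_len_segment[OF path_edges, of 0 i] assms by simp
  moreover have "walk_len E (p ! j) (p ! (length p - 1)) (length p - 1 - j)"
    using walk_len_segment[OF path_edges, of j "length p - 1"] assms by simp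
  ultimately have "walk_len E u v (i + k + (length p - 1 - j))"
    using assms(3) nth_first nth_last by (metis walk_len_trans)
  then have "enat (length p - 1) \<le> enat (i + k + (length p - 1 - j))"
    using dist_le_walk_len dist_eq by metis
  then show ?thesis using assms by simp
qed

lemma distinct: "distinct p"
  unfolding distinct_conv_nth
proof (intro allI impI)
  fix i j assume ij: "i < length p" "j < length p" "i \<noteq> j"
  show "p ! i \<noteq> p ! j"
  proof
    assume "p ! i = p ! j"
    then have "walk_len E (p ! i) (p ! j) 0" "walk_len E (p ! j) (p ! i) 0"
      by (simp_all add: walk_len_refl)
    then show False
      using index_distance_le[of i j 0] index_distance_le[of j i 0] ij by (cases "i \<le> j") auto
  qed
qed

lemma common_neighbour_index_distance:
  assumes "i \<le> j" "j < length p" "{p ! i, y} \<in> E" "{p ! j, y} \<in> E"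
  shows "j - i \<le> 2"
proof -
  have "{y, p ! j} \<in> E" using assms(4) by (simp add: insert_commute)
  then have "walk_len E (p ! i) (p ! j) (Suc 1)"
    using assms(3) by (intro walk_len_step walk_len_edge)
  then show ?thesis using index_distance_le assms(1,2) by fastforce
qed

lemma dist_neighbour_first:
  assumes "i < length p" "{y, p ! i} \<in> E"
  obtains a where "dist E y u = enat a" "i \<le> a + 1"
proof -
  have "walk_len E (p ! 0) (p ! i) i"
    using walk_len_segment[OF path_edges, of 0 i] assms by simp
  then have "walk_len E y u (Suc i)"
    using assms(2) nth_first by (auto intro: walk_len_step walk_len_sym)
  then obtain a where a: "dist E y u = enat a"
    using dist_le_walk_len by (metis enat_ile)
  then have "walk_len E (p ! 0) (p ! i) (Suc a)"
    using assms(2) nth_first by (auto intro: walk_len_snoc walk_len_sym walk_len_dist)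
  then have "i \<le> a + 1" using index_distance_le[of 0 i] assms(1) by simp
  with a show ?thesis using that by blast
qed

lemma dist_neighbour_last:
  assumes "i < length p" "{y, p ! i} \<in> E"
  obtains b where "dist E y v = enat b" "length p - 1 - i \<le> b + 1"
proof -
  have "walk_len E (p ! i) (p ! (length p - 1)) (length p - 1 - i)"
    using walk_len_segment[OF path_edges, of i "length p - 1"] assms by simp
  then have "walk_len E y v (Suc (length p - 1 - i))"
    using assms(2) nth_last by (auto intro: walk_len_step)
  then obtain b where b: "dist E y v = enat b"
    using dist_le_walk_len by (metis enat_ile)
  then have "walk_len E (p ! i) (p ! (length p - 1)) (Suc b)"
    using assms(2) nth_last by (auto intro: walk_len_step walk_len_dist simp: insert_commute)
  then have "length p - 1 - i \<le> b + 1"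
    using index_distance_le[of i "length p - 1"] assms(1) by simp
  with b show ?thesis using that by blast
qed

end

definition neighbours :: "nat set set \<Rightarrow> nat \<Rightarrow> nat set" where
  "neighbours H x = {y. {x, y} \<in> H}"

definition degree :: "nat set set \<Rightarrow> nat \<Rightarrow> nat" where
  "degree H x = card (neighbours H x)"

lemma finite_edges: "simple_graph V E \<Longrightarrow> finite E"
  unfolding simple_graph_def by (meson Pow_iff finite_Pow_iff finite_subset subsetI)

lemma edge_subset_vertices: "simple_graph V E \<Longrightarrow> {x, y} \<in> E \<Longrightarrow> x \<in> V \<and> y \<in> V"
  unfolding simple_graph_def by blast

lemma neighbours_subset: "simple_graph V E \<Longrightarrow> H \<subseteq> E \<Longrightarrow> neighbours H x \<subseteq> V"
  unfolding neighbours_def using edge_subset_vertices by blast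

lemma finite_neighbours: "simple_graph V E \<Longrightarrow> H \<subseteq> E \<Longrightarrow> finite (neighbours H x)"
  using neighbours_subset simple_graph_def finite_subset by metis

lemma card_Un_path_edges_le:
  assumes "finite H"
  shows "card (H \<union> path_edges p) \<le> card H + card {j. Suc j < length p \<and> {p ! j, p ! Suc j} \<notin> H}"
    (is "_ \<le> _ + card ?J")
proof -
  have eq: "H \<union> path_edges p = H \<union> (\<lambda>j. {p ! j, p ! Suc j}) ` ?J"
    unfolding path_edges_def by blast
  have "finite ?J" by (rule finite_subset[of _ "{..<length p}"]) auto
  have "card (H \<union> path_edges p) \<le> card H + card ((\<lambda>j. {p ! j, p ! Suc j}) ` ?J)"
    unfolding eq by (rule card_Un_le)
  also have "\<dots> \<le> card H + card ?J"
    using card_image_le[OF \<open>finite ?J\<close>] by (rule add_left_mono)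
  finally show ?thesis .
qed

lemma sum_add_le_sum_subset:
  fixes g h :: "'a \<Rightarrow> nat"
  assumes "finite V" "X \<subseteq> V" "\<forall>x\<in>V - X. g x \<le> h x" "sum g X + k \<le> sum h X"
  shows "sum g V + k \<le> sum h V"
proof -
  have "sum g (V - X) \<le> sum h (V - X)" using assms(3) by (intro sum_mono) blast
  then show ?thesis using assms(1,2,4) sum.subset_diff[of X V g] sum.subset_diff[of X V h] by simp
qed

lemma sum_add_card_le_sum:
  fixes g h :: "'a \<Rightarrow> nat"
  assumes "finite V" "X \<subseteq> V" "\<forall>x\<in>V. g x \<le> h x" "\<forall>x\<in>X. g x < h x"
  shows "sum g V + card X \<le> sum h V"
proof (rule sum_add_le_sum_subset[OF assms(1,2)])
  have "sum (\<lambda>x. Suc (g x)) X \<le> sum h X" using assms(4) by (intro sum_mono) auto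
  then show "sum g X + card X \<le> sum h X" by (simp add: sum_Suc)
qed (use assms(3) in blast)

section \<open>Potentials\<close>

definition degree_potential :: "nat set \<Rightarrow> nat \<Rightarrow> nat set set \<Rightarrow> nat" where
  "degree_potential V T H = (\<Sum>x\<in>V. min (degree H x) T)"

text \<open>\<open>min 3 (h - g)\<close>, written out by cases because the distances may be infinite.\<close>
definition capped_excess :: "enat \<Rightarrow> enat \<Rightarrow> nat" where
  "capped_excess g h =
    (if g + 3 \<le> h then 3 else if g + 2 \<le> h then 2 else if g + 1 \<le> h then 1 else 0)"

definition distance_potential :: "nat set \<Rightarrow> nat set set \<Rightarrow> nat set set \<Rightarrow> nat" where
  "distance_potential V E H = (\<Sum>a\<in>V. \<Sum>b\<in>V. capped_excess (dist E a b) (dist H a b))"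

lemma degree_potential_gain:
  assumes graph: "simple_graph V E" and "H \<subseteq> H'" "H' \<subseteq> E"
    and gain: "\<forall>x\<in>X. degree H x < T \<and> neighbours H x \<subset> neighbours H' x"
  shows "degree_potential V T H + card X \<le> degree_potential V T H'"
  unfolding degree_potential_def
proof (rule sum_add_card_le_sum)
  show "finite V" using graph unfolding simple_graph_def by blast
  show "X \<subseteq> V"
  proof
    fix x assume "x \<in> X"
    then obtain y where "{x, y} \<in> H'" using gain unfolding neighbours_def by blast
    then show "x \<in> V" using edge_subset_vertices[OF graph] \<open>H' \<subseteq> E\<close> by blast
  qed
  have finite: "finite (neighbours H' x)" for x by (rule finite_neighbours[OF graph assms(3)])
  have "degree H x \<le> degree H' x" for x
    unfolding degree_def using \<open>H \<subseteq> H'\<close> finite by (intro card_mono) (auto simp: neighbours_def)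
  then show "\<forall>x\<in>V. min (degree H x) T \<le> min (degree H' x) T"
    by (simp add: min.coboundedI1)
  have "degree H x < degree H' x" if "x \<in> X" for x
    unfolding degree_def using gain that finite by (intro psubset_card_mono) auto
  then show "\<forall>x\<in>X. min (degree H x) T < min (degree H' x) T"
    using gain by fastforce
qed

lemma degree_potential_le: "degree_potential V T H \<le> card V * T"
  unfolding degree_potential_def using sum_mono[of V "\<lambda>x. min (degree H x) T" "\<lambda>_. T"] by simp

lemma capped_excess_le: "capped_excess g h \<le> 3"
  unfolding capped_excess_def by auto

lemma capped_excess_mono: "h' \<le> h \<Longrightarrow> capped_excess g h' \<le> capped_excess g h"
  unfolding capped_excess_def by (auto dest: order_trans)

lemma capped_excess_pair_decrease:
  assumes "enat a \<le> x'" "x' \<le> x" "x' \<le> enat (a + 2)"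
    and "enat b \<le> y'" "y' \<le> y" "y' \<le> enat (b + 2)" and "x' + y' < x + y"
  shows "capped_excess (enat a) x' + capped_excess (enat b) y' + 1
    \<le> capped_excess (enat a) x + capped_excess (enat b) y"
proof -
  obtain c d where "x' = enat c" "y' = enat d" using assms(3,6) by (metis enat_ile)
  then show ?thesis using assms
    by (cases x; cases y) (auto simp: capped_excess_def numeral_eq_enat one_enat_def)
qed

lemma distance_potential_le: "distance_potential V E H \<le> 3 * card V * card V"
proof -
  have "(\<Sum>b\<in>V. capped_excess (dist E a b) (dist H a b)) \<le> (\<Sum>b\<in>V. 3)" for a
    by (intro sum_mono capped_excess_le)
  then have "distance_potential V E H \<le> (\<Sum>a\<in>V. card V * 3)"
    unfolding distance_potential_def by (intro sum_mono) simp
  then show ?thesis by simp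
qed

section \<open>A completion step\<close>

locale completion_path = shortest_path E u v p
  for V :: "nat set" and E H :: "nat set set" and u v :: nat and p :: "nat list" +
  assumes graph: "simple_graph V E"
    and H_subset: "H \<subseteq> E"
    and violating: "violating V E 2 H u v"
begin

abbreviation H' :: "nat set set" where
  "H' \<equiv> H \<union> path_edges p"

lemma H'_subset: "H' \<subseteq> E"
  using H_subset path_edges by blast

lemma finite_V: "finite V"
  using graph unfolding simple_graph_def by blast

lemma dist_H_ge: "enat (length p + 2) \<le> dist H u v"
proof -
  have "enat (length p - 1) + enat 2 < dist H u v"
    using violating dist_eq unfolding violating_def by simp
  then show ?thesis using not_Nil by (cases "dist H u v") auto
qed

lemma u_ne_v: "u \<noteq> v"
proof
  assume "u = v"
  then have "dist H u v \<le> enat 0" by (simp add: dist_le_walk_len walk_len_refl)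
  with order_trans[OF dist_H_ge this] show False by simp
qed

lemma excess_row_decrease:
  assumes "i < length p" "{p ! i, y} \<in> H"
  shows "(\<Sum>b\<in>V. capped_excess (dist E y b) (dist H' y b)) + 1
    \<le> (\<Sum>b\<in>V. capped_excess (dist E y b) (dist H y b))"
proof -
  have yE: "{y, p ! i} \<in> E" and yH': "{y, p ! i} \<in> H'"
    using assms(2) H_subset by (auto simp: insert_commute)
  obtain a where a: "dist E y u = enat a" "i \<le> a + 1"
    using dist_neighbour_first[OF assms(1) yE] .
  obtain b where b: "dist E y v = enat b" "length p - 1 - i \<le> b + 1"
    using dist_neighbour_last[OF assms(1) yE] .
  have "walk_len H' (p ! 0) (p ! i) i"
    using walk_len_segment[of p H' 0 i] assms(1) by simp
  then have "walk_len H' y u (Suc i)"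
    using nth_first by (auto intro: walk_len_step[OF yH'] walk_len_sym)
  then have du: "dist H' y u \<le> enat (i + 1)" by (simp add: dist_le_walk_len)
  have "walk_len H' (p ! i) (p ! (length p - 1)) (length p - 1 - i)"
    using walk_len_segment[of p H' i "length p - 1"] assms(1) by simp
  then have "walk_len H' y v (Suc (length p - 1 - i))"
    using nth_last by (auto intro: walk_len_step[OF yH'])
  then have dv: "dist H' y v \<le> enat (length p - 1 - i + 1)" by (simp add: dist_le_walk_len)
  have "dist H' y u + dist H' y v \<le> enat (i + 1) + enat (length p - 1 - i + 1)"
    using du dv by (rule add_mono)
  also have "\<dots> < enat (length p + 2)" using assms(1) by simp
  also have "\<dots> \<le> dist H y u + dist H y v"
    using dist_H_ge dist_triangle[of H u v y] dist_commute[of H u y] by simp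
  finally have shorter: "dist H' y u + dist H' y v < dist H y u + dist H y v" .
  have HH': "dist H' y w \<le> dist H y w" for w by (rule dist_antimono) blast
  have EH': "dist E y w \<le> dist H' y w" for w by (rule dist_antimono[OF H'_subset])
  have pair: "capped_excess (dist E y u) (dist H' y u) + capped_excess (dist E y v) (dist H' y v) + 1
    \<le> capped_excess (dist E y u) (dist H y u) + capped_excess (dist E y v) (dist H y v)"
    unfolding a(1) b(1)
    by (rule capped_excess_pair_decrease[OF _ HH' _ _ HH' _ shorter])
      (use EH'[of u] EH'[of v] a b du dv in \<open>auto intro: order_trans\<close>)
  show ?thesis
  proof (rule sum_add_le_sum_subset[OF finite_V, of "{u, v}"])
    show "{u, v} \<subseteq> V" using violating unfolding violating_def by blast
    show "\<forall>b\<in>V - {u, v}. capped_excess (dist E y b) (dist H' y b) \<le> capped_excess (dist E y b) (dist H y b)"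
      by (intro ballI capped_excess_mono HH')
  qed (use pair u_ne_v in simp)
qed

lemma distance_potential_gain:
  assumes "I \<subseteq> {..<length p}"
  shows "distance_potential V E H' + card (\<Union>i\<in>I. neighbours H (p ! i)) \<le> distance_potential V E H"
  unfolding distance_potential_def
proof (rule sum_add_card_le_sum[OF finite_V])
  show "(\<Union>i\<in>I. neighbours H (p ! i)) \<subseteq> V"
    using neighbours_subset[OF graph H_subset] by blast
  show "\<forall>a\<in>V. (\<Sum>b\<in>V. capped_excess (dist E a b) (dist H' a b))
      \<le> (\<Sum>b\<in>V. capped_excess (dist E a b) (dist H a b))"
    by (intro ballI sum_mono capped_excess_mono dist_antimono) blast
  show "\<forall>y\<in>\<Union>i\<in>I. neighbours H (p ! i). (\<Sum>b\<in>V. capped_excess (dist E y b) (dist H' y b))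
      < (\<Sum>b\<in>V. capped_excess (dist E y b) (dist H y b))"
    using excess_row_decrease assms unfolding neighbours_def by (fastforce simp: Suc_le_eq)
qed

lemma neighbourhoods_disjoint:
  assumes "i < length p" "j < length p" "i \<noteq> j" "i mod 3 = j mod 3"
  shows "neighbours H (p ! i) \<inter> neighbours H (p ! j) = {}"
proof -
  have *: "neighbours H (p ! i) \<inter> neighbours H (p ! j) = {}"
    if "i < j" "j < length p" "i mod 3 = j mod 3" for i j
  proof -
    have "3 dvd j - i" using mod_eq_dvd_iff_nat[of i j 3] that by simp
    then have "\<not> j - i \<le> 2" using \<open>i < j\<close> by (auto dest: dvd_imp_le)
    then show ?thesis
      using common_neighbour_index_distance[of i j] less_imp_le[OF \<open>i < j\<close>] that(2) H_subset
      unfolding neighbours_def by blast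
  qed
  from assms(3) consider "i < j" | "j < i" by linarith
  then show ?thesis using *[of i j] *[of j i] assms by cases auto
qed

text \<open>Pigeonhole on the residues mod 3 leaves a third of the indices, with pairwise disjoint
  neighbourhoods.\<close>
lemma heavy_neighbourhoods_card:
  assumes heavy: "\<forall>i\<in>I. i < length p \<and> T \<le> degree H (p ! i)"
  shows "T * card I \<le> 3 * card (\<Union>i\<in>I. neighbours H (p ! i))"
proof -
  have "finite I" using heavy by (intro finite_subset[of I "{..<length p}"]) auto
  then have "\<exists>r\<in>{..<3::nat}. card ((\<lambda>i. i mod 3) -` {r} \<inter> I) * card {..<3::nat} \<ge> card I"
    by (intro pigeonhole_card) (auto simp: lessThan_empty_iff)
  then obtain r where "card I \<le> card ((\<lambda>i. i mod 3) -` {r} \<inter> I) * 3"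
    by auto
  moreover define C where "C = (\<lambda>i. i mod 3) -` {r} \<inter> I"
  ultimately have card_C: "card I \<le> 3 * card C" by simp
  have "finite C" using \<open>finite I\<close> unfolding C_def by blast
  have "T * card C = (\<Sum>i\<in>C. T)" by simp
  also have "\<dots> \<le> (\<Sum>i\<in>C. card (neighbours H (p ! i)))"
    using heavy unfolding C_def degree_def by (intro sum_mono) auto
  also have "\<dots> = card (\<Union>i\<in>C. neighbours H (p ! i))"
    using \<open>finite C\<close> finite_neighbours[OF graph H_subset] neighbourhoods_disjoint heavy
    unfolding C_def by (intro card_UN_disjoint[symmetric]) auto
  also have "\<dots> \<le> card (\<Union>i\<in>I. neighbours H (p ! i))"
    using \<open>finite I\<close> finite_neighbours[OF graph H_subset] unfolding C_def
    by (intro card_mono) auto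
  finally have "T * card C \<le> card (\<Union>i\<in>I. neighbours H (p ! i))" .
  moreover have "T * card I \<le> 3 * (T * card C)" using card_C by simp
  ultimately show ?thesis by linarith
qed

definition new_edge_indices :: "nat set" where
  "new_edge_indices = {j. Suc j < length p \<and> {p ! j, p ! Suc j} \<notin> H}"

lemma finite_new_edge_indices: "finite new_edge_indices"
  unfolding new_edge_indices_def by (rule finite_subset[of _ "{..<length p}"]) auto

lemma card_H'_le: "card H' \<le> card H + card new_edge_indices"
proof -
  have "finite H" using finite_edges[OF graph] H_subset by (rule finite_subset[rotated])
  then show ?thesis unfolding new_edge_indices_def by (rule card_Un_path_edges_le)
qed

lemma new_neighbours:
  assumes "j \<in> new_edge_indices"
  shows "neighbours H (p ! j) \<subset> neighbours H' (p ! j)"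
    and "neighbours H (p ! Suc j) \<subset> neighbours H' (p ! Suc j)"
proof -
  have "{p ! j, p ! Suc j} \<in> H' - H" using assms unfolding new_edge_indices_def path_edges_def by auto
  then have "p ! Suc j \<in> neighbours H' (p ! j) - neighbours H (p ! j)"
    "p ! j \<in> neighbours H' (p ! Suc j) - neighbours H (p ! Suc j)"
    unfolding neighbours_def by (auto simp: insert_commute)
  moreover have "neighbours H x \<subseteq> neighbours H' x" for x unfolding neighbours_def by blast
  ultimately show "neighbours H (p ! j) \<subset> neighbours H' (p ! j)"
    "neighbours H (p ! Suc j) \<subset> neighbours H' (p ! Suc j)" by blast+
qed

lemma degree_potential_gain_first:
  "degree_potential V T H + card {j \<in> new_edge_indices. degree H (p ! j) < T}
    \<le> degree_potential V T H'"
proof -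
  let ?A = "{j \<in> new_edge_indices. degree H (p ! j) < T}"
  have "card (nth p ` ?A) = card ?A"
    using distinct unfolding new_edge_indices_def by (intro card_image inj_on_nth) auto
  moreover have "degree_potential V T H + card (nth p ` ?A) \<le> degree_potential V T H'"
    using new_neighbours by (intro degree_potential_gain[OF graph _ H'_subset]) auto
  ultimately show ?thesis by simp
qed

lemma degree_potential_gain_second:
  "degree_potential V T H + card {j \<in> new_edge_indices. degree H (p ! Suc j) < T}
    \<le> degree_potential V T H'"
proof -
  let ?B = "{j \<in> new_edge_indices. degree H (p ! Suc j) < T}"
  have "card ((\<lambda>j. p ! Suc j) ` ?B) = card ?B"
    using distinct unfolding new_edge_indices_def
    by (intro card_image inj_onI) (auto simp: nth_eq_iff_index_eq)
  moreover have "degree_potential V T H + card ((\<lambda>j. p ! Suc j) ` ?B) \<le> degree_potential V T H'"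
    using new_neighbours by (intro degree_potential_gain[OF graph _ H'_subset]) auto
  ultimately show ?thesis by simp
qed

lemma potential_step:
  "T * card H' + 3 * distance_potential V E H' + 2 * T * degree_potential V T H
    \<le> T * card H + 3 * distance_potential V E H + 2 * T * degree_potential V T H'"
proof -
  define A where "A = {j \<in> new_edge_indices. degree H (p ! j) < T}"
  define B where "B = {j \<in> new_edge_indices. degree H (p ! Suc j) < T}"
  define S where "S = {i. i < length p \<and> T \<le> degree H (p ! i)}"
  have "new_edge_indices \<subseteq> A \<union> B \<union> S"
    unfolding A_def B_def S_def new_edge_indices_def by auto
  then have "card new_edge_indices \<le> card (A \<union> B \<union> S)"
    using finite_new_edge_indices unfolding A_def B_def S_def by (intro card_mono) auto
  also have "\<dots> \<le> card A + card B + card S"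
    by (meson card_Un_le add_le_mono1 order_trans)
  finally have "card H' \<le> card H + card A + card B + card S"
    using card_H'_le by linarith
  from mult_le_mono2[OF this, of T]
  have "T * card H' \<le> T * card H + T * card A + T * card B + T * card S"
    by (simp add: distrib_left)
  moreover have "T * degree_potential V T H + T * card A \<le> T * degree_potential V T H'"
    "T * degree_potential V T H + T * card B \<le> T * degree_potential V T H'"
    using mult_le_mono2[OF degree_potential_gain_first, of T]
      mult_le_mono2[OF degree_potential_gain_second, of T]
    unfolding A_def B_def by (simp_all add: distrib_left)
  moreover have "T * card S \<le> 3 * card (\<Union>i\<in>S. neighbours H (p ! i))"
    unfolding S_def by (rule heavy_neighbourhoods_card) blast
  moreover have "distance_potential V E H' + card (\<Union>i\<in>S. neighbours H (p ! i))
      \<le> distance_potential V E H"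
    unfolding S_def by (rule distance_potential_gain) auto
  ultimately show ?thesis by linarith
qed

end

section \<open>The bound\<close>

lemma completion_potential_invariant:
  assumes graph: "simple_graph V E" and "(completion_step V E 2)\<^sup>*\<^sup>* {} H"
  shows "H \<subseteq> E \<and> T * card H + 3 * distance_potential V E H
    \<le> 2 * T * degree_potential V T H + 3 * distance_potential V E {}"
  using assms(2)
proof (induction rule: rtranclp_induct)
  case (step H H\<^sub>1)
  then obtain u v p where "violating V E 2 H u v" "is_shortest_path E u v p"
    and H\<^sub>1: "H\<^sub>1 = H \<union> path_edges p"
    unfolding completion_step_def by blast
  with graph step.IH interpret completion_path V E H u v p
    by unfold_locales auto
  show ?case using H'_subset potential_step[of T] step.IH unfolding H\<^sub>1 by linarith
qed simp

lemma bound_from_potential: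
  fixes n T h :: real
  assumes "1 \<le> n" "sqrt n \<le> T" "T \<le> 2 * sqrt n" "T * h \<le> 2 * n * T\<^sup>2 + 9 * n\<^sup>2"
  shows "h \<le> 13 * n powr (3/2)"
proof -
  define s where "s = sqrt n"
  have s: "1 \<le> s" "s * s = n" "s \<le> T" "T \<le> 2 * s"
    using assms unfolding s_def by auto
  have "0 < T" using s by linarith
  have "n * T \<le> n * (2 * s)" using mult_left_mono[OF s(4), of n] assms(1) by simp
  then have "T * (n * T) \<le> T * (n * (2 * s))" using \<open>0 < T\<close> by (simp add: mult_left_mono)
  then have deg: "2 * n * T\<^sup>2 \<le> T * (4 * n * s)" by (simp add: power2_eq_square algebra_simps)
  have "s * s \<le> s * T" using mult_left_mono[OF s(3), of s] s(1) by simp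
  then have "n * (s * s) \<le> n * (s * T)" using assms(1) by (simp add: mult_left_mono)
  then have dst: "9 * n\<^sup>2 \<le> T * (9 * n * s)" using s(2) by (simp add: power2_eq_square algebra_simps)
  have "T * h \<le> T * (13 * n * s)" using assms(4) deg dst by (simp add: algebra_simps)
  then have "h \<le> 13 * n * s" using \<open>0 < T\<close> by simp
  moreover have "n powr (3/2) = n * s"
  proof -
    have "n powr (3/2) = n powr 1 * n powr (1/2)" using powr_add[of n 1 "1/2"] by simp
    then show ?thesis using assms(1) unfolding s_def by (simp add: powr_half_sqrt)
  qed
  ultimately show ?thesis by simp
qed

lemma completion_card_bound:
  assumes graph: "simple_graph V E" and completion: "(completion_step V E 2)\<^sup>*\<^sup>* {} H"
  shows "real (card H) \<le> 13 * real (card V) powr (3/2)"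
proof (cases "V = {}")
  case True
  then have "E = {}" using graph unfolding simple_graph_def by fastforce
  then show ?thesis using completion_potential_invariant[OF assms, of 0] by simp
next
  case False
  define n where "n = card V"
  define T where "T = nat \<lceil>sqrt (real n)\<rceil>"
  have "1 \<le> n" using False graph unfolding n_def simple_graph_def by (simp add: Suc_le_eq card_gt_0_iff)
  have "T * card H \<le> 2 * T * degree_potential V T H + 3 * distance_potential V E {}"
    using completion_potential_invariant[OF assms, of T] by linarith
  also have "\<dots> \<le> 2 * T * (n * T) + 3 * (3 * n * n)"
    using degree_potential_le[of V T H] distance_potential_le[of V E "{}"] unfolding n_def
    by (intro add_mono mult_le_mono2) auto
  finally have "real (T * card H) \<le> real (2 * T * (n * T) + 3 * (3 * n * n))"
    by (simp only: of_nat_le_iff)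
  then have "real T * real (card H) \<le> 2 * real n * (real T)\<^sup>2 + 9 * (real n)\<^sup>2"
    by (simp add: power2_eq_square algebra_simps)
  moreover have "sqrt (real n) \<le> real T" "real T \<le> 2 * sqrt (real n)"
  proof -
    have "1 \<le> sqrt (real n)" using \<open>1 \<le> n\<close> by simp
    moreover have "real T = real_of_int \<lceil>sqrt (real n)\<rceil>" unfolding T_def by simp
    ultimately show "sqrt (real n) \<le> real T" "real T \<le> 2 * sqrt (real n)"
      using of_int_ceiling_le_add_one[of "sqrt (real n)"] le_of_int_ceiling[of "sqrt (real n)"]
      by linarith+
  qed
  ultimately show ?thesis
    using bound_from_potential \<open>1 \<le> n\<close> unfolding n_def by simp
qed

text \<open>The bound holds for every graph reachable by completion steps.\<close>
theorem theorem2: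
  shows "\<exists>C::real. \<forall>(V::nat set) (E::nat set set) H.
    simple_graph V E \<longrightarrow> (completion_step V E 2)\<^sup>*\<^sup>* {} H
    \<longrightarrow> (\<forall>u v. \<not> violating V E 2 H u v)
    \<longrightarrow> real (card H) \<le> C * real (card V) powr (3/2)"
  using completion_card_bound by blast

end
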